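(* Let $n\ge2$ and $\mathsf u\in\mathcal S_n$. Arrange the $n(n-1)$ positions of $\bm\lambda_n$ in an array with $n$ rows and $n-1$ columns, position $j$ lying in row $\lceil j/(n-1)\rceil$ and column $((j-1)\bmod (n-1))+1$. Then each of the $n-1$ columns contains exactly one negative skip of $\mathsf u$, and each row except the last (i.e. each of rows $1,\dots,n-1$) contains exactly one negative skip of $\mathsf u$.
   Context: $\widetilde S_n$ is the group, under composition $(vw)(k)=v(w(k))$, of bijections $w:\mathbb Z\to\mathbb Z$ with $w(i+n)=w(i)+n$ and $\sum_{i=1}^n w(i)=\binom{n+1}2$. For $i\not\equiv j\pmod n$, $(\!(i,j)\!)$ swaps $i+kn$ and $j+kn$ for all $k$; $(\!(i,j)\!)=(\!(j,i)\!)=(\!(i+kn,j+kn)\!)$; $s_i=(\!(i,i+1)\!)$, $i\in\{0,\dots,n-1\}$. "$i\bmod n$" is the representative of $i$ modulo $n$ in $\{1,\dots,n\}$. $\bm\lambda_n$ is the word $[s_0,\dots,s_{n-1}]$ repeated $n-1$ times with $j$-th letter $\sigma_j=s_{(j-1)\bmod n}$ (index in $\{0,\dots,n-1\}$). A subword is $\mathsf u=[u_1,\dots,u_{n(n-1)}]$ with $u_j\in\{\sigma_j,e\}$; $j$ is a skip if $u_j=e$. $u_{(j)}=u_1\cdots u_j$, $u_{(0)}=e$. $\mathcal S_n$ is the set of subwords with exactly $2n-2$ skips and product $e$. For a skip $j$, its reflection is $t_j=u_{(j-1)}\sigma_ju_{(j-1)}^{-1}$. The skip $j$ is negative if, writing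 $t_j=(\!(a,b)\!)$ with integers $a<b$, one has $1\le (b\bmod n)<(a\bmod n)\le n$; otherwise it is positive. *)

theory Defs
  imports Complex_Main
begin

text \<open>Affine permutations are represented as functions int => int, with product
  (v w)(k) = v (w k), i.e. function composition.\<close>

definition aff_perm :: "nat \<Rightarrow> (int \<Rightarrow> int) \<Rightarrow> bool" where
  "aff_perm n w \<longleftrightarrow> bij w \<and> (\<forall>i. w (i + int n) = w i + int n)
     \<and> (\<Sum>i=1..int n. w i) = int n * (int n + 1) div 2"

definition modrep :: "nat \<Rightarrow> int \<Rightarrow> int" where
  "modrep n i = (i - 1) mod int n + 1"

text \<open>The affine transposition ((a,b)) (for a, b not congruent mod n):
  swaps a + kn and b + kn for all k.\<close>
definition aff_transp :: "nat \<Rightarrow> int \<Rightarrow> int \<Rightarrow> int \<Rightarrow> int" where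
  "aff_transp n a b = (\<lambda>k. if k mod int n = a mod int n then k - a + b
                          else if k mod int n = b mod int n then k - b + a else k)"

definition sref :: "nat \<Rightarrow> int \<Rightarrow> int \<Rightarrow> int" where
  "sref n i = aff_transp n i (i + 1)"

text \<open>j-th letter of lambda_n (j >= 1): sigma_j = s_{(j-1) mod n}, index in {0..n-1}.\<close>
definition sigma :: "nat \<Rightarrow> nat \<Rightarrow> int \<Rightarrow> int" where
  "sigma n j = sref n (int ((j - 1) mod n))"

text \<open>A subword of lambda_n is encoded by its set K of skips (positions j in
  {1..n(n-1)} with u_j = e); the other letters are u_j = sigma_j.\<close>
definition letter :: "nat \<Rightarrow> nat set \<Rightarrow> nat \<Rightarrow> int \<Rightarrow> int" where
  "letter n K j = (if j \<in> K then id else sigma n j)"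

fun prefprod :: "nat \<Rightarrow> nat set \<Rightarrow> nat \<Rightarrow> int \<Rightarrow> int" where
  "prefprod n K 0 = id"
| "prefprod n K (Suc j) = prefprod n K j \<circ> letter n K (Suc j)"

definition in_Sn :: "nat \<Rightarrow> nat set \<Rightarrow> bool" where
  "in_Sn n K \<longleftrightarrow> K \<subseteq> {1..n * (n - 1)} \<and> card K = 2 * n - 2
     \<and> prefprod n K (n * (n - 1)) = id"

definition skip_refl :: "nat \<Rightarrow> nat set \<Rightarrow> nat \<Rightarrow> int \<Rightarrow> int" where
  "skip_refl n K j = prefprod n K (j - 1) \<circ> sigma n j \<circ> inv (prefprod n K (j - 1))"

definition neg_skip :: "nat \<Rightarrow> nat set \<Rightarrow> nat \<Rightarrow> bool" where
  "neg_skip n K j \<longleftrightarrow> j \<in> K \<and>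
     (\<exists>a b. a < b \<and> a mod int n \<noteq> b mod int n \<and> skip_refl n K j = aff_transp n a b
        \<and> 1 \<le> modrep n b \<and> modrep n b < modrep n a \<and> modrep n a \<le> int n)"

definition row_of :: "nat \<Rightarrow> nat \<Rightarrow> nat" where
  "row_of n j = nat \<lceil>real j / real (n - 1)\<rceil>"

definition col_of :: "nat \<Rightarrow> nat \<Rightarrow> nat" where
  "col_of n j = (j - 1) mod (n - 1) + 1"

end

theory Submission
  imports Defs
begin

text \<open>Write \<open>u t\<close> for the prefix product \<open>u\<^sub>(\<^sub>t\<^sub>)\<close>. Letter \<open>t + 1\<close> of \<open>\<lambda>\<^sub>n\<close> is
  \<open>((t, t + 1))\<close>, so when it is not skipped it moves the value at position \<open>t\<close> to \<open>t + 1\<close>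
  and the value at \<open>t + 1\<close> to \<open>t + n\<close>. Hence the values of \<open>u t\<close> on the window of
  positions \<open>t + 1, \<dots>, t + n - 1\<close> travel along strands, the residue classes of positions
  modulo \<open>n - 1\<close>, and a strand is disturbed only by the skips in its column. For the full word
  every strand is shifted by \<open>n\<close>, whereas \<open>u 0 = u (n(n - 1)) = id\<close>; so every column
  holds at least two skips, and, as there are \<open>2n - 2\<close> skips, exactly two. The reflections of
  the two skips of a column involve the same two residues in opposite order, so exactly one of
  them is negative. Finally, a negative skip at \<open>t + 1\<close> separates \<open>u t t\<close> from
  \<open>u t (t + 1)\<close> by the multiple \<open>n (t div (n - 1))\<close>, and \<open>u t t\<close> increases with \<open>t\<close>:
  no row contains two negative skips and the last row none, so the \<open>n - 1\<close> negative skips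
  occupy the first \<open>n - 1\<close> rows once each.\<close>

lemma mod_eq_iff_add_mult:
  fixes x y m :: int
  shows "x mod m = y mod m \<longleftrightarrow> (\<exists>q. x = y + m * q)"
  by (auto simp: mod_eq_dvd_iff dvd_def algebra_simps)

lemma card_eq_sum_card_fibres:
  assumes "finite S" "finite T" "f ` S \<subseteq> T"
  shows "card S = (\<Sum>y\<in>T. card {x \<in> S. f x = y})"
  using sum.group[OF assms, of "\<lambda>_. 1::nat"] by simp

section \<open>Affine permutations and transpositions\<close>

lemma add_period_mult:
  fixes f :: "int \<Rightarrow> int"
  assumes "\<And>k. f (k + m) = f k + m"
  shows "f (k + m * q) = f k + m * q"
proof -
  have nat: "f (k + m * int i) = f k + m * int i" for k and i :: nat
  proof (induction i arbitrary: k)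
    case (Suc i)
    have "f (k + m * int (Suc i)) = f ((k + m) + m * int i)" by (simp add: algebra_simps)
    also have "\<dots> = f (k + m) + m * int i" by (rule Suc)
    also have "\<dots> = f k + m * int (Suc i)" unfolding assms by (simp add: algebra_simps)
    finally show ?case .
  qed simp
  show ?thesis
  proof (cases "q \<ge> 0")
    case True
    then show ?thesis using nat[of k "nat q"] by simp
  next
    case False
    then show ?thesis using nat[of "k + m * q" "nat (- q)"] by simp
  qed
qed

lemma periodic_bij_mod_eq_iff:
  fixes f :: "int \<Rightarrow> int"
  assumes "bij f" and "\<And>k. f (k + int n) = f k + int n"
  shows "f x mod int n = f y mod int n \<longleftrightarrow> x mod int n = y mod int n"
proof -
  have "f (y + int n * q) = f y + int n * q" for q
    using assms(2) by (rule add_period_mult)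
  moreover have "f x = f z \<longleftrightarrow> x = z" for z
    using assms(1) by (simp add: bij_is_inj inj_eq)
  ultimately show ?thesis by (metis mod_eq_iff_add_mult)
qed

lemma aff_transp_add_period: "aff_transp n a b (k + int n) = aff_transp n a b k + int n"
  unfolding aff_transp_def by auto

lemma aff_transp_add_mult_both: "aff_transp n (a + int n * q) (b + int n * q) = aff_transp n a b"
  unfolding aff_transp_def by (auto simp: fun_eq_iff)

lemma aff_transp_left: "aff_transp n a b (a + int n * q) = b + int n * q"
  unfolding aff_transp_def by simp

lemma aff_transp_right:
  "a mod int n \<noteq> b mod int n \<Longrightarrow> aff_transp n a b (b + int n * q) = a + int n * q"
  unfolding aff_transp_def by simp

lemma aff_transp_other:
  "k mod int n \<noteq> a mod int n \<Longrightarrow> k mod int n \<noteq> b mod int n \<Longrightarrow> aff_transp n a b k = k"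
  unfolding aff_transp_def by simp

lemma aff_transp_cases:
  obtains q where "k = a + int n * q" "aff_transp n a b k = b + int n * q"
  | q where "k = b + int n * q" "a mod int n \<noteq> b mod int n" "aff_transp n a b k = a + int n * q"
  | "k mod int n \<noteq> a mod int n" "k mod int n \<noteq> b mod int n" "aff_transp n a b k = k"
proof (cases "k mod int n = a mod int n")
  case True
  then obtain q where "k = a + int n * q" using mod_eq_iff_add_mult by blast
  then show thesis using that(1) aff_transp_left by blast
next
  case ka: False
  show thesis
  proof (cases "k mod int n = b mod int n")
    case True
    then obtain q where "k = b + int n * q" using mod_eq_iff_add_mult by blast
    moreover have "a mod int n \<noteq> b mod int n" using ka True by simp
    ultimately show thesis using that(2) aff_transp_right by blast
  next
    case False
    then show thesis using ka that(3) aff_transp_other by blast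
  qed
qed

lemma aff_transp_involutive:
  assumes "a mod int n \<noteq> b mod int n"
  shows "aff_transp n a b (aff_transp n a b k) = k"
  using aff_transp_cases[where k=k and n=n and a=a and b=b]
  by cases (use assms aff_transp_left aff_transp_right aff_transp_other in auto)

lemma bij_aff_transp:
  assumes "a mod int n \<noteq> b mod int n" shows "bij (aff_transp n a b)"
  using aff_transp_involutive[OF assms] by (rule involuntory_imp_bij)

lemma conj_aff_transp:
  fixes f :: "int \<Rightarrow> int"
  assumes bij: "bij f" and per: "\<And>k. f (k + int n) = f k + int n"
    and ab: "a mod int n \<noteq> b mod int n"
  shows "f \<circ> aff_transp n a b \<circ> inv f = aff_transp n (f a) (f b)"
proof
  fix k
  have shift: "f (x + int n * q) = f x + int n * q" for x q
    using per by (rule add_period_mult)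
  note res = periodic_bij_mod_eq_iff[of f n, OF bij per]
  define m where "m = inv f k"
  have "(f \<circ> aff_transp n a b \<circ> inv f) k = f (aff_transp n a b m)" by (simp add: m_def)
  also have "\<dots> = aff_transp n (f a) (f b) (f m)"
    using aff_transp_cases[where k=m and n=n and a=a and b=b]
  proof cases
    case (1 q)
    then show ?thesis by (simp add: shift aff_transp_left)
  next
    case (2 q)
    then show ?thesis using res[of a b] by (simp add: shift aff_transp_right)
  next
    case 3
    then have "f m mod int n \<noteq> f a mod int n" "f m mod int n \<noteq> f b mod int n"
      using res by simp_all
    then show ?thesis using 3 by (simp add: aff_transp_other)
  qed
  also have "f m = k" unfolding m_def by (rule surj_f_inv_f[OF bij_is_surj[OF bij]])
  finally show "(f \<circ> aff_transp n a b \<circ> inv f) k = aff_transp n (f a) (f b) k" .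
qed

lemma aff_transp_eq_imp_shift:
  assumes "a < b" "a' < b'" "aff_transp n a b = aff_transp n a' b'"
  shows "\<exists>q. a' = a + int n * q \<and> b' = b + int n * q"
proof -
  have image: "aff_transp n a b a' = b'"
    using assms(3) aff_transp_left[where n=n and a=a' and b=b' and q=0] by simp
  from aff_transp_cases[where k=a' and n=n and a=a and b=b] show ?thesis
  proof cases
    case (1 q)
    then show ?thesis using image by auto
  next
    case (2 q)
    then show ?thesis using image assms(1,2) by linarith
  next
    case 3
    then show ?thesis using image assms(2) by linarith
  qed
qed

lemma modrep_add_mult: "modrep n (x + int n * q) = modrep n x"
  unfolding modrep_def by (metis diff_add_eq mod_mult_self2)

lemma modrep_bounds:
  assumes "0 < n" shows "1 \<le> modrep n x \<and> modrep n x \<le> int n"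
proof -
  have "0 \<le> (x - 1) mod int n" "(x - 1) mod int n < int n" using assms by simp_all
  then show ?thesis unfolding modrep_def by simp
qed

lemma modrep_eq_imp_mod_eq: "modrep n x = modrep n y \<Longrightarrow> x mod int n = y mod int n"
  unfolding modrep_def by (simp add: mod_eq_dvd_iff)

lemma modrep_eq_in_block:
  assumes "int n * w < x" "x \<le> int n * w + int n"
  shows "modrep n x = x - int n * w"
proof -
  have "(x - 1) mod int n = (x - 1 - int n * w + int n * w) mod int n" by simp
  also have "\<dots> = x - 1 - int n * w"
    unfolding mod_mult_self2 using assms by (intro mod_pos_pos_trivial) auto
  finally show ?thesis unfolding modrep_def by simp
qed

section \<open>Strands of the prefix products\<close>

lemma mod_eq_in_window_imp_eq:
  fixes d :: int
  assumes "a < p" "p \<le> a + d" "a < q" "q \<le> a + d" "q mod d = p mod d"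
  shows "q = p"
proof (rule ccontr)
  assume "q \<noteq> p"
  moreover have "d dvd q - p" using assms(5) by (simp add: mod_eq_dvd_iff)
  ultimately have "\<bar>d\<bar> \<le> \<bar>q - p\<bar>" by (simp add: dvd_imp_le_int)
  then show False using assms(1-4) by linarith
qed

lemma mod_eq_in_window_exists:
  fixes d :: int
  assumes "0 < d"
  obtains q where "a < q" "q \<le> a + d" "q mod d = p mod d"
proof
  show "a < a + 1 + (p - a - 1) mod d" "a + 1 + (p - a - 1) mod d \<le> a + d"
    using assms pos_mod_bound[of d "p - a - 1"] pos_mod_sign[of d "p - a - 1"] by linarith+
  show "(a + 1 + (p - a - 1) mod d) mod d = p mod d"
    by (simp add: mod_simps)
qed

locale lambda_subword =
  fixes n :: nat and K :: "nat set"
  assumes two_le_n: "2 \<le> n"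
begin

abbreviation u :: "nat \<Rightarrow> int \<Rightarrow> int" where "u t \<equiv> prefprod n K t"

lemma consecutive_mod_ne: "i mod int n \<noteq> (i + 1) mod int n"
proof
  assume "i mod int n = (i + 1) mod int n"
  then have "int n dvd 1" by (simp add: mod_eq_dvd_iff)
  then show False using two_le_n by simp
qed

lemma sigma_Suc: "sigma n (Suc t) = aff_transp n (int (t mod n)) (int (t mod n) + 1)"
  unfolding sigma_def sref_def by simp

lemma letter_add_period: "letter n K j (k + int n) = letter n K j k + int n"
  unfolding letter_def sigma_def sref_def using aff_transp_add_period by auto

lemma bij_letter: "bij (letter n K j)"
  unfolding letter_def sigma_def sref_def using bij_aff_transp consecutive_mod_ne by auto

lemma prefprod_add_period: "u t (k + int n) = u t k + int n"
  by (induction t arbitrary: k) (auto simp: letter_add_period)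

lemma prefprod_add_mult: "u t (k + int n * q) = u t k + int n * q"
  using prefprod_add_period by (rule add_period_mult)

lemma bij_prefprod: "bij (u t)"
  by (induction t) (simp_all only: prefprod.simps bij_id bij_comp bij_letter)

lemma prefprod_Suc_nonskip:
  "Suc t \<notin> K \<Longrightarrow> u (Suc t) k = u t (aff_transp n (int (t mod n)) (int (t mod n) + 1) k)"
  by (simp add: letter_def sigma_Suc)

lemma prefprod_Suc_diag:
  "u (Suc t) (int t + 1) = u t (if Suc t \<in> K then int t + 1 else int t)"
proof (cases "Suc t \<in> K")
  case False
  have "(int t + 1) mod int n \<noteq> int (t mod n) mod int n"
    using consecutive_mod_ne[of "int t"] by (simp add: of_nat_mod)
  moreover have "(int t + 1) mod int n = (int (t mod n) + 1) mod int n"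
    by (simp add: of_nat_mod mod_simps)
  ultimately show ?thesis
    unfolding prefprod_Suc_nonskip[OF False] using False by (simp add: aff_transp_def)
qed (simp add: letter_def)

lemma prefprod_Suc_wrap:
  "u (Suc t) (int t + int n) = u t (if Suc t \<in> K then int t else int t + 1) + int n"
proof (cases "Suc t \<in> K")
  case True
  then show ?thesis by (simp add: letter_def prefprod_add_period)
next
  case False
  have "(int t + int n) mod int n = int (t mod n) mod int n"
    by (simp add: of_nat_mod)
  then have "u (Suc t) (int t + int n) = u t (int t + 1 + int n)"
    unfolding prefprod_Suc_nonskip[OF False] by (simp add: aff_transp_def algebra_simps)
  then show ?thesis using False by (simp add: prefprod_add_period)
qed

lemma prefprod_Suc_inner:
  assumes "int t + 1 < p" "p \<le> int t + int n - 1"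
  shows "u (Suc t) p = u t p"
proof (cases "Suc t \<in> K")
  case False
  have "p mod int n \<noteq> int t mod int n" "p mod int n \<noteq> (int t + 1) mod int n"
    using assms zdvd_not_zless by (auto simp: mod_eq_dvd_iff)
  moreover have "int (t mod n) mod int n = int t mod int n"
    "(int (t mod n) + 1) mod int n = (int t + 1) mod int n"
    by (simp_all add: of_nat_mod mod_simps)
  ultimately show ?thesis
    unfolding prefprod_Suc_nonskip[OF False] by (simp add: aff_transp_def)
qed (simp add: letter_def)

declare prefprod.simps(2) [simp del]

lemma skip_refl_Suc: "skip_refl n K (Suc t) = aff_transp n (u t (int t)) (u t (int t + 1))"
proof -
  define i where "i = int (t mod n)"
  define q where "q = int (t div n)"
  have t: "int t = i + int n * q"
    unfolding i_def q_def by (simp flip: of_nat_mult of_nat_add)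
  have "skip_refl n K (Suc t) = u t \<circ> aff_transp n i (i + 1) \<circ> inv (u t)"
    unfolding skip_refl_def by (simp add: sigma_Suc i_def)
  also have "\<dots> = aff_transp n (u t i) (u t (i + 1))"
    using bij_prefprod prefprod_add_period consecutive_mod_ne by (rule conj_aff_transp)
  also have "\<dots> = aff_transp n (u t i + int n * q) (u t (i + 1) + int n * q)"
    by (rule aff_transp_add_mult_both[symmetric])
  also have "\<dots> = aff_transp n (u t (int t)) (u t (int t + 1))"
    using prefprod_add_mult[of t i q] prefprod_add_mult[of t "i + 1" q]
    by (simp add: t algebra_simps)
  finally show ?thesis .
qed

lemma prefprod_diag_mod_ne: "u t (int t) mod int n \<noteq> u t (int t + 1) mod int n"
  using periodic_bij_mod_eq_iff[of "u t" n] bij_prefprod prefprod_add_period consecutive_mod_ne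
  by blast

lemma neg_skip_Suc_iff:
  assumes "Suc t \<in> K" "u t (int t) < u t (int t + 1)"
  shows "neg_skip n K (Suc t) \<longleftrightarrow> modrep n (u t (int t + 1)) < modrep n (u t (int t))"
proof
  assume "neg_skip n K (Suc t)"
  then obtain a b where ab: "a < b" "skip_refl n K (Suc t) = aff_transp n a b"
      "modrep n b < modrep n a"
    unfolding neg_skip_def by blast
  then obtain q where "a = u t (int t) + int n * q" "b = u t (int t + 1) + int n * q"
    using aff_transp_eq_imp_shift[OF assms(2) ab(1)] skip_refl_Suc by metis
  then show "modrep n (u t (int t + 1)) < modrep n (u t (int t))"
    using ab(3) by (simp add: modrep_add_mult)
next
  assume "modrep n (u t (int t + 1)) < modrep n (u t (int t))"
  then show "neg_skip n K (Suc t)"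
    unfolding neg_skip_def
    using assms modrep_bounds[of n] two_le_n prefprod_diag_mod_ne skip_refl_Suc by fastforce
qed

abbreviation d :: int where "d \<equiv> int n - 1"

lemma d_pos: "0 < d"
  using two_le_n by simp

lemma of_nat_n_minus_1 [simp]: "int (n - Suc 0) = d"
  using two_le_n by (simp add: of_nat_diff)

text \<open>The window values of the prefix products of \<open>\<lambda>\<^sub>n\<close> itself: a value gains \<open>n\<close>
  each time its strand wraps around the window, i.e. every \<open>n - 1\<close> letters.\<close>

definition free_val :: "int \<Rightarrow> int" where
  "free_val p = p + (p - 1) div d"

lemma free_val_add_mult: "free_val (x + d * k) = free_val x + int n * k"
proof -
  have "(x + d * k - 1) div d = ((x - 1) + k * d) div d" by (simp add: algebra_simps)
  also have "\<dots> = k + (x - 1) div d" using d_pos by simp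
  finally show ?thesis unfolding free_val_def by (simp add: algebra_simps)
qed

lemma free_val_wrap: "free_val (x + int n) = free_val (x + 1) + int n"
  using free_val_add_mult[of "x + 1" 1] by simp

lemma free_val_step: "free_val x + 1 \<le> free_val (x + 1)"
  unfolding free_val_def using d_pos by (simp add: zdiv_mono1)

lemma free_val_first_window: "0 < p \<Longrightarrow> p \<le> d \<Longrightarrow> free_val p = p"
  unfolding free_val_def by (simp add: div_pos_pos_trivial)

lemma strand_transport:
  assumes "t1 \<le> t2" "int t1 < p" "p \<le> int t1 + d" "int t2 < q" "q \<le> int t2 + d"
    and "q mod d = p mod d"
    and "\<forall>j\<in>K. t1 < j \<and> j \<le> t2 \<longrightarrow> int j mod d \<noteq> p mod d"
  shows "u t2 q - free_val q = u t1 p - free_val p"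
  using assms(1,4-7)
proof (induction t2 arbitrary: q rule: dec_induct)
  case base
  then show ?case using mod_eq_in_window_imp_eq[of "int t1" p d q] assms(2,3) by simp
next
  case (step t)
  show ?case
  proof (cases "q \<le> int t + d")
    case True
    then show ?thesis using step prefprod_Suc_inner[of t q] by auto
  next
    case False
    then have q: "q = (int t + 1) + d" using step.prems by simp
    then have same: "(int t + 1) mod d = p mod d"
      using step.prems(3) by (metis mod_add_self2)
    then have "Suc t \<notin> K"
      using step.prems(4) step.hyps by (auto simp: add.commute)
    moreover have "u t (int t + 1) - free_val (int t + 1) = u t1 p - free_val p"
      using step.IH[of "int t + 1"] step.prems(4) same two_le_n by auto
    ultimately show ?thesis
      using prefprod_Suc_wrap[of t] q free_val_wrap[of "int t"] by simp
  qed
qed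

lemma prefprod_eq_free_val:
  assumes "int t < p" "p \<le> int t + d" "\<forall>j\<in>K. j \<le> t \<longrightarrow> int j mod d \<noteq> p mod d"
  shows "u t p = free_val p"
proof -
  obtain p0 where "0 < p0" "p0 \<le> d" "p0 mod d = p mod d"
    using mod_eq_in_window_exists[OF d_pos, of 0 p] by (metis add_0)
  then have "u t p - free_val p = u 0 p0 - free_val p0"
    using assms by (intro strand_transport) auto
  then show ?thesis using \<open>0 < p0\<close> \<open>p0 \<le> d\<close> free_val_first_window by simp
qed

lemma prefprod_le_free_val:
  "u t (int t) \<le> free_val (int t + 1) \<and> (\<forall>p. int t < p \<and> p \<le> int t + d \<longrightarrow> u t p \<le> free_val p)"
proof (induction t)
  case 0
  have "p \<le> free_val p" if "0 < p" for p
    unfolding free_val_def using that d_pos by (simp add: pos_imp_zdiv_nonneg_iff)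
  then show ?case by (simp add: order_trans[of 0 1])
next
  case (Suc t)
  then have diag: "u t (int t) \<le> free_val (int t + 1)"
    and window: "\<And>p. int t < p \<Longrightarrow> p \<le> int t + d \<Longrightarrow> u t p \<le> free_val p"
    by auto
  have "u (Suc t) (int t + 1) \<le> free_val (int t + 1)"
    using diag window[of "int t + 1"] two_le_n prefprod_Suc_diag[of t] by auto
  then have "u (Suc t) (int (Suc t)) \<le> free_val (int (Suc t) + 1)"
    using free_val_step[of "int t + 1"] by (simp add: add.commute)
  moreover have "u (Suc t) p \<le> free_val p" if "int t + 1 < p" "p \<le> int t + 1 + d" for p
  proof (cases "p \<le> int t + d")
    case True
    then show ?thesis using window[of p] that prefprod_Suc_inner[of t p] by simp
  next
    case False
    then have "p = int t + int n" using that by simp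
    moreover have "u t (if Suc t \<in> K then int t else int t + 1) \<le> free_val (int t + 1)"
      using diag window[of "int t + 1"] two_le_n by auto
    ultimately show ?thesis using prefprod_Suc_wrap[of t] free_val_wrap[of "int t"] by simp
  qed
  ultimately show ?case by simp
qed

lemma col_of_eq_iff:
  assumes "1 \<le> j" "1 \<le> j'"
  shows "col_of n j = col_of n j' \<longleftrightarrow> int j mod d = int j' mod d"
proof -
  have "col_of n j = col_of n j' \<longleftrightarrow> int ((j - 1) mod (n - 1)) = int ((j' - 1) mod (n - 1))"
    unfolding col_of_def by simp
  also have "\<dots> \<longleftrightarrow> (int j - 1) mod d = (int j' - 1) mod d"
    using assms by (simp add: of_nat_mod of_nat_diff)
  also have "\<dots> \<longleftrightarrow> int j mod d = int j' mod d"
    by (simp add: mod_eq_dvd_iff)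
  finally show ?thesis .
qed

lemma col_of_bounds: "col_of n j \<in> {1..n - 1}"
proof -
  have "(j - 1) mod (n - 1) < n - 1" using two_le_n by simp
  then show ?thesis unfolding col_of_def by simp
qed

lemma row_of_eq:
  assumes "1 \<le> j"
  shows "row_of n j = (j - 1) div (n - 1) + 1"
proof -
  define m where "m = n - 1"
  define v where "v = (j - 1) div m"
  have "0 < m" unfolding m_def using two_le_n by simp
  have "j = m * v + (j - 1) mod m + 1" unfolding v_def using assms by simp
  moreover have "(j - 1) mod m < m" using \<open>0 < m\<close> by simp
  ultimately have "m * v < j" "j \<le> m * v + m" by linarith+
  then have "real m * real v < real j" "real j \<le> real m * (real v + 1)"
    by (simp_all flip: of_nat_mult of_nat_add add: algebra_simps)
  then have "real v < real j / real m" "real j / real m \<le> real v + 1"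
    using \<open>0 < m\<close> by (simp_all add: field_simps)
  then have "\<lceil>real j / real m\<rceil> = int v + 1"
    by (intro ceiling_unique) simp_all
  then show ?thesis unfolding row_of_def m_def[symmetric] v_def by simp
qed

end

locale Sn_subword = lambda_subword +
  assumes in_Sn: "in_Sn n K"
begin

abbreviation N :: nat where "N \<equiv> n * (n - 1)"

lemma prefprod_N: "u N = id"
  using in_Sn unfolding in_Sn_def by simp

lemma K_subset: "K \<subseteq> {1..N}"
  using in_Sn unfolding in_Sn_def by simp

lemma finite_K: "finite K"
  using K_subset finite_subset by blast

lemma of_nat_N: "int N = int n * d"
  using two_le_n by (simp add: of_nat_diff)

lemma free_val_last_window:
  assumes "int N < p" "p \<le> int N + d"
  shows "free_val p = p + int n"
proof -
  have "free_val p = free_val (p - int N) + int n * int n"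
    using free_val_add_mult[of "p - int N" "int n"] by (simp add: of_nat_N mult.commute)
  also have "free_val (p - int N) = p - int N"
    using assms by (intro free_val_first_window) auto
  finally show ?thesis by (simp add: of_nat_N algebra_simps)
qed

lemma prefprod_eq_free_val_minus_n:
  assumes "t \<le> N" "int t < p" "p \<le> int t + d" "\<forall>j\<in>K. t < j \<longrightarrow> int j mod d \<noteq> p mod d"
  shows "u t p = free_val p - int n"
proof -
  obtain q where q: "int N < q" "q \<le> int N + d" "q mod d = p mod d"
    using mod_eq_in_window_exists[OF d_pos] by metis
  then have "u N q - free_val q = u t p - free_val p"
    using assms by (intro strand_transport) auto
  then show ?thesis using q free_val_last_window prefprod_N by simp
qed

text \<open>The diagonal bound needs \<open>t < N\<close>: at \<open>t = N\<close> it fails by one, since \<open>u N = id\<close>.\<close>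

lemma free_val_minus_n_le_prefprod:
  assumes "t \<le> N"
  shows "(t < N \<longrightarrow> free_val (int t + 1) - int n \<le> u t (int t))
    \<and> (\<forall>p. int t < p \<and> p \<le> int t + d \<longrightarrow> free_val p - int n \<le> u t p)"
  using assms
proof (induction "N - t" arbitrary: t)
  case 0
  then have "t = N" by simp
  then show ?case using free_val_last_window prefprod_N by simp
next
  case (Suc k)
  then have "t < N" by simp
  then have diag: "Suc t < N \<Longrightarrow> free_val (int t + 2) - int n \<le> u (Suc t) (int t + 1)"
    and window: "\<And>p. int t + 1 < p \<Longrightarrow> p \<le> int t + 1 + d \<Longrightarrow> free_val p - int n \<le> u (Suc t) p"
    using Suc.hyps(1)[of "Suc t"] Suc.hyps(2) by (auto simp: add.commute)
  have first: "free_val (int t + 1) - int n \<le> u (Suc t) (int t + 1)"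
  proof (cases "Suc t < N")
    case True
    then show ?thesis using diag free_val_step[of "int t + 1"] by (simp add: algebra_simps)
  next
    case False
    then have N: "N = Suc t" using \<open>t < N\<close> by simp
    have "free_val (int t + 1) + 1 \<le> free_val (int (Suc t) + 1)"
      using free_val_step[of "int t + 1"] by simp
    also have "\<dots> = int (Suc t) + 1 + int n"
      using free_val_last_window[of "int (Suc t) + 1", unfolded N] d_pos by simp
    finally show ?thesis using prefprod_N unfolding N by simp
  qed
  have last: "free_val (int t + 1) - int n \<le> u (Suc t) (int t + int n) - int n"
    using window[of "int t + int n"] free_val_wrap[of "int t"] two_le_n by simp
  have "free_val (int t + 1) - int n \<le> u t (int t)"
    "free_val (int t + 1) - int n \<le> u t (int t + 1)"
    using first last prefprod_Suc_diag[of t] prefprod_Suc_wrap[of t] by (auto split: if_splits)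
  moreover have "free_val p - int n \<le> u t p" if "int t + 1 < p" "p \<le> int t + d" for p
    using that window[of p] prefprod_Suc_inner[of t p] by simp
  ultimately show ?case
    by (metis add1_zle_eq order_le_less)
qed

section \<open>Columns and rows\<close>

lemma neg_skip_mem: "neg_skip n K j \<Longrightarrow> j \<in> K"
  unfolding neg_skip_def by simp

lemma K_bounds: "j \<in> K \<Longrightarrow> 1 \<le> j \<and> j \<le> N"
  using K_subset by auto

lemma add_n_mod_d: "(x + int n) mod d = (x + 1) mod d"
  by (metis add.assoc add_diff_cancel_left' add_diff_eq mod_add_self2)

lemma col_of_eq_Suc_iff:
  "j \<in> K \<Longrightarrow> col_of n j = col_of n (Suc t) \<longleftrightarrow> int j mod d = (int t + 1) mod d"
  using col_of_eq_iff[of j "Suc t"] K_bounds by (simp add: add.commute)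

lemma prefprod_first_in_column:
  assumes "\<forall>j\<in>K. j \<le> t \<longrightarrow> col_of n j \<noteq> col_of n (Suc t)"
  shows "u t (int t + 1) = free_val (int t + 1)"
  using assms two_le_n col_of_eq_Suc_iff by (intro prefprod_eq_free_val) auto

lemma prefprod_last_in_column:
  assumes "Suc t \<in> K" "\<forall>j\<in>K. Suc t < j \<longrightarrow> col_of n j \<noteq> col_of n (Suc t)"
  shows "u t (int t) = free_val (int t + 1) - int n"
proof -
  have "u (Suc t) (int t + int n) = free_val (int t + int n) - int n"
    using assms K_bounds[of "Suc t"] two_le_n col_of_eq_Suc_iff add_n_mod_d
    by (intro prefprod_eq_free_val_minus_n) auto
  then show ?thesis using prefprod_Suc_wrap[of t] assms(1) free_val_wrap by simp
qed

lemma two_le_card_column: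
  assumes "c \<in> {1..n - 1}"
  shows "2 \<le> card {j \<in> K. col_of n j = c}"
proof (rule ccontr)
  define C where "C = {j \<in> K. col_of n j = c}"
  assume "\<not> 2 \<le> card {j \<in> K. col_of n j = c}"
  then consider "card C = 0" | "card C = 1" unfolding C_def by linarith
  then show False
  proof cases
    case 1
    then have "C = {}" using finite_K by (simp add: C_def)
    have col_c: "col_of n c = c" using assms unfolding col_of_def by auto
    obtain q where q: "int N < q" "q \<le> int N + d" "q mod d = int c mod d"
      using mod_eq_in_window_exists[OF d_pos] by metis
    have "\<forall>j\<in>K. int j mod d \<noteq> q mod d"
      using \<open>C = {}\<close> col_of_eq_iff[of _ c] K_bounds assms col_c q(3) unfolding C_def by force
    then have "u N q = free_val q"
      using q by (intro prefprod_eq_free_val) auto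
    moreover have "free_val q = q + int n" using q(1,2) by (rule free_val_last_window)
    ultimately show False using prefprod_N two_le_n by simp
  next
    case 2
    then obtain j where C: "C = {j}" by (rule card_1_singletonE)
    then have "j \<in> K" "col_of n j = c" unfolding C_def by blast+
    have only: "\<forall>i\<in>K. col_of n i = col_of n j \<longrightarrow> i = j"
      using C \<open>col_of n j = c\<close> unfolding C_def by blast
    obtain t where j: "j = Suc t" using K_bounds[OF \<open>j \<in> K\<close>] by (cases j) auto
    have "u t (int t + 1) = free_val (int t + 1)"
      using only j by (intro prefprod_first_in_column) auto
    moreover have "u t (int t) = free_val (int t + 1) - int n"
      using only j \<open>j \<in> K\<close> by (intro prefprod_last_in_column) auto
    ultimately show False using prefprod_diag_mod_ne[of t] by simp
  qed
qed

lemma card_column: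
  assumes "c \<in> {1..n - 1}"
  shows "card {j \<in> K. col_of n j = c} = 2"
proof -
  have "(\<Sum>c\<in>{1..n - 1}. card {j \<in> K. col_of n j = c}) = card K"
    using card_eq_sum_card_fibres[OF finite_K, of "{1..n - 1}" "col_of n"] col_of_bounds
    by (simp add: image_subset_iff)
  also have "\<dots> = (\<Sum>c\<in>{1..n - 1}. 2)"
  proof -
    have "card K = 2 * n - 2" using in_Sn unfolding in_Sn_def by blast
    then show ?thesis by (simp add: diff_mult_distrib)
  qed
  finally have "(\<Sum>c\<in>{1..n - 1}. 2) = (\<Sum>c\<in>{1..n - 1}. card {j \<in> K. col_of n j = c})" ..
  from sum_mono_inv[OF this two_le_card_column assms] show ?thesis by simp
qed

lemma column_skips_ordered:
  assumes "c \<in> {1..n - 1}"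
  obtains t1 t2 where "t1 < t2" "{j \<in> K. col_of n j = c} = {Suc t1, Suc t2}"
proof -
  obtain a b where C: "{j \<in> K. col_of n j = c} = {a, b}" "a \<noteq> b"
    using card_column[OF assms] by (meson card_2_iff)
  then have "a \<in> K" "b \<in> K" by blast+
  then obtain ta tb where "a = Suc ta" "b = Suc tb"
    using K_bounds[of a] K_bounds[of b] by (cases a; cases b) auto
  then show thesis
    using that[of ta tb] that[of tb ta] C by (cases "ta < tb") (auto simp: insert_commute)
qed

lemma prefprod_diag_less_at_skip:
  assumes "Suc t \<in> K"
  shows "u t (int t) < u t (int t + 1)"
proof -
  obtain t1 t2 where "t1 < t2"
    and C: "{j \<in> K. col_of n j = col_of n (Suc t)} = {Suc t1, Suc t2}"
    using column_skips_ordered[OF col_of_bounds] by metis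
  have mem: "j \<in> K \<and> col_of n j = col_of n (Suc t) \<longleftrightarrow> j = Suc t1 \<or> j = Suc t2" for j
    using arg_cong[where f="\<lambda>S. j \<in> S", OF C] by simp
  have partner: "j = Suc t1 \<or> j = Suc t2" if "j \<in> K" "col_of n j = col_of n (Suc t)" for j
    using that mem[of j] by simp
  have ne: "u t (int t) \<noteq> u t (int t + 1)" using prefprod_diag_mod_ne by metis
  have "t = t1 \<or> t = t2" using partner[OF assms] by simp
  then show ?thesis
  proof
    assume "t = t1"
    then have "u t (int t + 1) = free_val (int t + 1)"
      using partner \<open>t1 < t2\<close> by (intro prefprod_first_in_column) fastforce
    then show ?thesis using prefprod_le_free_val[of t] ne by simp
  next
    assume "t = t2"
    then have "u t (int t) = free_val (int t + 1) - int n"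
      using partner \<open>t1 < t2\<close> assms by (intro prefprod_last_in_column) fastforce+
    moreover have "free_val (int t + 1) - int n \<le> u t (int t + 1)"
      using free_val_minus_n_le_prefprod[of t] K_bounds[OF assms] two_le_n by simp
    ultimately show ?thesis using ne by simp
  qed
qed

lemma column_skips_swap:
  assumes "t1 < t2" and C: "{j \<in> K. col_of n j = c} = {Suc t1, Suc t2}"
  shows "modrep n (u t2 (int t2)) = modrep n (u t1 (int t1 + 1))"
    and "modrep n (u t2 (int t2 + 1)) = modrep n (u t1 (int t1))"
proof -
  have mem: "j \<in> K \<and> col_of n j = c \<longleftrightarrow> j = Suc t1 \<or> j = Suc t2" for j
    using arg_cong[where f="\<lambda>S. j \<in> S", OF C] by simp
  have K: "Suc t1 \<in> K" "Suc t2 \<in> K" and col: "col_of n (Suc t2) = col_of n (Suc t1)"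
    using mem[of "Suc t1"] mem[of "Suc t2"] by simp_all
  have partner: "i = Suc t1 \<or> i = Suc t2" if "i \<in> K" "col_of n i = col_of n (Suc t1)" for i
    using that mem[of i] mem[of "Suc t1"] by simp
  have res: "(int t2 + 1) mod d = (int t1 + 1) mod d"
    using col col_of_eq_Suc_iff K(2) by (simp add: add.commute)
  then obtain k where k: "int t2 + 1 = (int t1 + 1) + d * k"
    by (auto simp: mod_eq_iff_add_mult add.commute)
  have fv: "free_val (int t2 + 1) = free_val (int t1 + 1) + int n * k"
    unfolding k by (rule free_val_add_mult)
  have Q1: "u t1 (int t1 + 1) = free_val (int t1 + 1)"
    using partner assms(1) by (intro prefprod_first_in_column) fastforce
  have "u t2 (int t2) = free_val (int t2 + 1) - int n"
    using partner K(2) col assms(1) by (intro prefprod_last_in_column) fastforce+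
  then have "u t2 (int t2) = u t1 (int t1 + 1) + int n * (k - 1)"
    using Q1 fv by (simp add: algebra_simps)
  then show "modrep n (u t2 (int t2)) = modrep n (u t1 (int t1 + 1))"
    by (simp add: modrep_add_mult)
  have "u t2 (int t2 + 1) - free_val (int t2 + 1)
      = u (Suc t1) (int t1 + int n) - free_val (int t1 + int n)"
  proof (rule strand_transport)
    show "(int t2 + 1) mod d = (int t1 + int n) mod d"
      using res add_n_mod_d[of "int t1"] by simp
    show "\<forall>j\<in>K. Suc t1 < j \<and> j \<le> t2 \<longrightarrow> int j mod d \<noteq> (int t1 + int n) mod d"
      using partner col_of_eq_Suc_iff add_n_mod_d by fastforce
  qed (use assms(1) two_le_n in auto)
  then have "u t2 (int t2 + 1) = u t1 (int t1) + int n * k"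
    using prefprod_Suc_wrap[of t1] K(1) fv free_val_wrap[of "int t1"] by (simp add: algebra_simps)
  then show "modrep n (u t2 (int t2 + 1)) = modrep n (u t1 (int t1))"
    by (simp add: modrep_add_mult)
qed

lemma card_neg_skips_column:
  assumes "c \<in> {1..n - 1}"
  shows "card {j \<in> {1..N}. neg_skip n K j \<and> col_of n j = c} = 1"
proof -
  obtain t1 t2 where t12: "t1 < t2" and C: "{j \<in> K. col_of n j = c} = {Suc t1, Suc t2}"
    using column_skips_ordered[OF assms] by metis
  have mem: "j \<in> K \<and> col_of n j = c \<longleftrightarrow> j = Suc t1 \<or> j = Suc t2" for j
    using arg_cong[where f="\<lambda>S. j \<in> S", OF C] by simp
  have K: "Suc t1 \<in> K" "Suc t2 \<in> K" using mem[of "Suc t1"] mem[of "Suc t2"] by simp_all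
  let ?R = "modrep n (u t1 (int t1))" and ?Q = "modrep n (u t1 (int t1 + 1))"
  have ne: "?R \<noteq> ?Q" using prefprod_diag_mod_ne modrep_eq_imp_mod_eq by metis
  have neg1: "neg_skip n K (Suc t1) \<longleftrightarrow> ?Q < ?R"
    using neg_skip_Suc_iff[OF K(1) prefprod_diag_less_at_skip[OF K(1)]] .
  have neg2: "neg_skip n K (Suc t2) \<longleftrightarrow> ?R < ?Q"
    using neg_skip_Suc_iff[OF K(2) prefprod_diag_less_at_skip[OF K(2)]]
      column_skips_swap[OF t12 C] by simp
  obtain j where "j \<in> {Suc t1, Suc t2}" "neg_skip n K j"
    and other: "\<forall>i\<in>{Suc t1, Suc t2}. i \<noteq> j \<longrightarrow> \<not> neg_skip n K i"
  proof (cases "?Q < ?R")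
    case True
    then show thesis using that[of "Suc t1"] neg1 neg2 by auto
  next
    case False
    then show thesis using that[of "Suc t2"] neg1 neg2 ne by auto
  qed
  have "{i \<in> {1..N}. neg_skip n K i \<and> col_of n i = c} = {j}"
  proof (rule set_eqI)
    fix x
    show "x \<in> {i \<in> {1..N}. neg_skip n K i \<and> col_of n i = c} \<longleftrightarrow> x \<in> {j}"
      using mem[of x] mem[of j] K_bounds[of x] neg_skip_mem[of x] other
        \<open>j \<in> {Suc t1, Suc t2}\<close> \<open>neg_skip n K j\<close> by auto
  qed
  then show ?thesis by simp
qed

lemma prefprod_diag_mono:
  assumes "t \<le> t'"
  shows "u t (int t) \<le> u t' (int t')"
  using assms
proof (induction t' rule: dec_induct)
  case (step s)
  have "u s (int s) \<le> u (Suc s) (int s + 1)"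
    using prefprod_Suc_diag[of s] prefprod_diag_less_at_skip[of s] by fastforce
  then show ?case using step.IH by (simp add: add.commute)
qed simp

lemma neg_skip_straddles:
  assumes neg: "neg_skip n K (Suc t)"
  shows "u t (int t) \<le> int n * (int t div d) \<and> int n * (int t div d) < u t (int t + 1)"
proof -
  have K: "Suc t \<in> K" using neg by (rule neg_skip_mem)
  define v where "v = int t div d"
  define R where "R = u t (int t)"
  define Q where "Q = u t (int t + 1)"
  have "d * v \<le> int t" "int t < d * v + d"
    unfolding v_def using d_pos pos_mod_bound[of d "int t"] pos_mod_sign[of d "int t"]
      mult_div_mod_eq[of d "int t"] by linarith+
  moreover have "free_val (int t + 1) - int n \<le> R"
    unfolding R_def using free_val_minus_n_le_prefprod[of t] K_bounds[OF K] by simp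
  moreover have "Q \<le> free_val (int t + 1)"
    unfolding Q_def using prefprod_le_free_val[of t] two_le_n by simp
  ultimately have low: "int n * (v - 1) < R" and high: "Q \<le> int n * v + int n"
    unfolding free_val_def v_def by (simp_all add: algebra_simps)
  have "R < Q" unfolding R_def Q_def using K by (rule prefprod_diag_less_at_skip)
  have swapped: "modrep n Q < modrep n R"
    using neg_skip_Suc_iff[OF K] \<open>R < Q\<close> neg unfolding R_def Q_def by simp
  \<comment> \<open>\<open>modrep n\<close> increases on each of the blocks \<open>(n(v - 1), nv]\<close> and \<open>(nv, nv + n]\<close>,
    which contain \<open>R\<close> and \<open>Q\<close>; the swapped order forces \<open>R\<close> into the first, \<open>Q\<close> into the second.\<close>
  have "\<not> Q \<le> int n * v"
  proof
    assume "Q \<le> int n * v"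
    then have "modrep n Q = Q - int n * (v - 1)" "modrep n R = R - int n * (v - 1)"
      using modrep_eq_in_block[where n=n and w="v - 1"] low \<open>R < Q\<close> by (simp_all add: algebra_simps)
    then show False using swapped \<open>R < Q\<close> by simp
  qed
  moreover have "\<not> int n * v < R"
  proof
    assume "int n * v < R"
    then have "modrep n Q = Q - int n * v" "modrep n R = R - int n * v"
      using modrep_eq_in_block[where n=n and w=v] high \<open>R < Q\<close> by simp_all
    then show False using swapped \<open>R < Q\<close> by simp
  qed
  ultimately show ?thesis unfolding R_def Q_def v_def by simp
qed

lemma card_neg_skips_row_le_1:
  "card {j \<in> {1..N}. neg_skip n K j \<and> row_of n j = r} \<le> 1"
proof -
  define A where "A = {j \<in> {1..N}. neg_skip n K j \<and> row_of n j = r}"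
  have no_pair: False if jA: "j \<in> A" "j' \<in> A" and "j < j'" for j j'
  proof -
    obtain t t' where t: "j = Suc t" "j' = Suc t'"
      using jA unfolding A_def by (cases j; cases j') auto
    then have neg: "neg_skip n K (Suc t)" "neg_skip n K (Suc t')"
      using jA unfolding A_def by auto
    have "t div (n - 1) = t' div (n - 1)"
      using jA row_of_eq[of j] row_of_eq[of j'] t unfolding A_def by auto
    then have v: "int t div d = int t' div d"
      by (metis of_nat_div of_nat_n_minus_1 One_nat_def)
    have "u (Suc t) (int (Suc t)) = u t (int t + 1)"
      using prefprod_Suc_diag[of t] neg_skip_mem[OF neg(1)] by (simp add: add.commute)
    moreover have "u (Suc t) (int (Suc t)) \<le> u t' (int t')"
      using prefprod_diag_mono[of "Suc t" t'] \<open>j < j'\<close> t by simp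
    ultimately show False
      using neg_skip_straddles[OF neg(1)] neg_skip_straddles[OF neg(2)] v by simp
  qed
  have "\<forall>a\<in>A. \<forall>b\<in>A. a = b"
  proof (intro ballI)
    fix a b
    assume "a \<in> A" "b \<in> A"
    then show "a = b" using no_pair[of a b] no_pair[of b a] by (meson linorder_neqE_nat)
  qed
  moreover have "finite A" unfolding A_def by simp
  ultimately have "card A \<le> Suc 0" using card_le_Suc0_iff_eq by blast
  then show ?thesis unfolding A_def by simp
qed

lemma no_neg_skip_in_last_row:
  assumes "j \<in> {1..N}" "neg_skip n K j"
  shows "row_of n j \<noteq> n"
proof
  assume "row_of n j = n"
  obtain t where t: "j = Suc t" using assms(1) by (cases j) auto
  then have "t div (n - 1) = n - 1"
    using \<open>row_of n j = n\<close> row_of_eq[of j] two_le_n by simp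
  then have "int t div d = d"
    by (metis of_nat_div of_nat_n_minus_1 One_nat_def)
  moreover have "u (Suc t) (int (Suc t)) = u t (int t + 1)"
    using prefprod_Suc_diag[of t] neg_skip_mem assms(2) t by (simp add: add.commute)
  moreover have "u (Suc t) (int (Suc t)) \<le> u N (int N)"
    using prefprod_diag_mono[of "Suc t" N] assms(1) t by simp
  ultimately show False
    using neg_skip_straddles[of t] assms(2) t prefprod_N of_nat_N by simp
qed

lemma row_of_bounds:
  assumes "j \<in> {1..N}"
  shows "row_of n j \<in> {1..n}"
proof -
  have "(j - 1) div (n - 1) \<le> (N - 1) div (n - 1)"
    using assms by (intro div_le_mono) auto
  also have "\<dots> < n"
    using two_le_n by (simp add: div_less_iff_less_mult mult.commute)
  finally show ?thesis using row_of_eq[of j] assms by simp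
qed

lemma card_neg_skips: "card {j \<in> {1..N}. neg_skip n K j} = n - 1"
proof -
  have "card {j \<in> {1..N}. neg_skip n K j}
      = (\<Sum>c\<in>{1..n - 1}. card {j \<in> {1..N}. neg_skip n K j \<and> col_of n j = c})"
    using card_eq_sum_card_fibres[of "{j \<in> {1..N}. neg_skip n K j}" "{1..n - 1}" "col_of n"]
      col_of_bounds by (simp add: image_subset_iff conj_assoc)
  also have "\<dots> = n - 1" using card_neg_skips_column by simp
  finally show ?thesis .
qed

lemma card_neg_skips_row:
  assumes "r \<in> {1..n - 1}"
  shows "card {j \<in> {1..N}. neg_skip n K j \<and> row_of n j = r} = 1"
proof -
  define row where "row r = card {j \<in> {1..N}. neg_skip n K j \<and> row_of n j = r}" for r
  have "n - 1 = (\<Sum>r\<in>{1..n}. row r)"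
    using card_eq_sum_card_fibres[of "{j \<in> {1..N}. neg_skip n K j}" "{1..n}" "row_of n"]
      row_of_bounds card_neg_skips unfolding row_def by (simp add: image_subset_iff conj_assoc)
  also have "\<dots> = (\<Sum>r\<in>{1..n - 1}. row r) + row n"
    using sum.cl_ivl_Suc[of row 1 "n - 1"] two_le_n by simp
  also have "row n = 0"
    unfolding row_def using no_neg_skip_in_last_row by auto
  finally have "(\<Sum>r\<in>{1..n - 1}. row r) = (\<Sum>r\<in>{1..n - 1}. 1)" by simp
  moreover have "row r \<le> 1" for r
    unfolding row_def by (rule card_neg_skips_row_le_1)
  ultimately have "row r = 1"
    using sum_mono_inv[where f=row and g="\<lambda>_. 1"] assms by blast
  then show ?thesis unfolding row_def .
qed

end

theorem proposition8p3:
  fixes n :: nat and K :: "nat set"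
  assumes "n \<ge> 2" and "in_Sn n K"
  shows "(\<forall>c\<in>{1..n - 1}. card {j \<in> {1..n * (n - 1)}. neg_skip n K j \<and> col_of n j = c} = 1)
       \<and> (\<forall>r\<in>{1..n - 1}. card {j \<in> {1..n * (n - 1)}. neg_skip n K j \<and> row_of n j = r} = 1)"
proof -
  interpret Sn_subword n K
    using assms by unfold_locales
  show ?thesis
    using card_neg_skips_column card_neg_skips_row by blast
qed

end
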